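(* Let $G=(V,E)$ be a $k$-uniform linear hypergraph with a vertex correspondence $\sigma$ and weighted lists of colours $(L,\mu)$ assigned to its vertices, where each list is finite. Let $\ell,n>0$ be such that (i) $\ell/n\ge 3e$ ($e$ Euler's number); (ii) $|L(v)|_\mu\ge\ell$ for all $v\in V$; (iii) $|N_{G,L,\sigma}(v,c)|_\mu\le n$ for all $v\in V$ and $c\in L(v)$. Then $G$ has an $(L,\sigma)$-colouring.
   Context: A hypergraph is $k$-uniform if every edge has exactly $k$ vertices, and linear if two distinct edges share at most one vertex; two distinct vertices are adjacent if they lie in a common edge. Colours are positive integers. A vertex correspondence $\sigma$ consists of permutations $\sigma_{u,v}$ of $\mathbb{N}$ for all ordered pairs of adjacent vertices $u,v$, with $\sigma_{v,u}=\sigma_{u,v}^{-1}$; $(u,c)$ blocks $(v,c')$ if $\sigma_{u,v}(c)=c'$. A weighted list assignment $(L,\mu)$ gives each vertex $v$ a list $L(v)\subseteq\mathbb{N}$ and weights $\mu(v)\colon L(v)\to[0,1]$, written $\mu(v,c)$; for a set $A$ of vertex–colour pairs, $|A|_\mu=\sum_{(v,c)\in A}\mu(v,c)$, and $|L(v)|_\mu=\sum_{c\in L(v)}\mu(v,c)$. An $(L,\sigma)$-colouring is $\gamma\colon V\to\mathbb{N}$ with $\gamma(v)\in L(v)$ for all $v$ such that $(v,\gamma(v))$ does not block $(u,\gamma(u))$ for all adjacent $u,v$. $N_{G,L,\sigma}(v,c)$ is the set of pairs $(w,c')$ with $w$ adjacent to $v$, $c'\in L(w)$, and $(w,c')$ blocking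 $(v,c)$. *)

theory Defs
  imports Complex_Main
begin

definition colours :: "nat set" where
  "colours = {c. 0 < c}"

definition hypergraph :: "'a set \<Rightarrow> 'a set set \<Rightarrow> bool" where
  "hypergraph V E \<longleftrightarrow> (\<forall>e\<in>E. e \<subseteq> V)"

definition k_uniform :: "nat \<Rightarrow> 'a set set \<Rightarrow> bool" where
  "k_uniform k E \<longleftrightarrow> (\<forall>e\<in>E. finite e \<and> card e = k)"

definition linear_hg :: "'a set set \<Rightarrow> bool" where
  "linear_hg E \<longleftrightarrow> (\<forall>e\<in>E. \<forall>f\<in>E. e \<noteq> f \<longrightarrow> finite (e \<inter> f) \<and> card (e \<inter> f) \<le> 1)"

definition adjacent :: "'a set set \<Rightarrow> 'a \<Rightarrow> 'a \<Rightarrow> bool" where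
  "adjacent E u v \<longleftrightarrow> u \<noteq> v \<and> (\<exists>e\<in>E. u \<in> e \<and> v \<in> e)"

definition vertex_correspondence :: "'a set set \<Rightarrow> ('a \<Rightarrow> 'a \<Rightarrow> nat \<Rightarrow> nat) \<Rightarrow> bool" where
  "vertex_correspondence E \<sigma> \<longleftrightarrow>
     (\<forall>u v. adjacent E u v \<longrightarrow>
        bij_betw (\<sigma> u v) colours colours \<and> (\<forall>c\<in>colours. \<sigma> v u (\<sigma> u v c) = c))"

definition blocks :: "('a \<Rightarrow> 'a \<Rightarrow> nat \<Rightarrow> nat) \<Rightarrow> 'a \<times> nat \<Rightarrow> 'a \<times> nat \<Rightarrow> bool" where
  "blocks \<sigma> uc vc' \<longleftrightarrow> \<sigma> (fst uc) (fst vc') (snd uc) = snd vc'"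

definition weighted_list_assignment ::
  "'a set \<Rightarrow> ('a \<Rightarrow> nat set) \<Rightarrow> ('a \<Rightarrow> nat \<Rightarrow> real) \<Rightarrow> bool" where
  "weighted_list_assignment V L \<mu> \<longleftrightarrow>
     (\<forall>v\<in>V. L v \<subseteq> colours \<and> (\<forall>c\<in>L v. 0 \<le> \<mu> v c \<and> \<mu> v c \<le> 1))"

definition wsize :: "('a \<Rightarrow> nat \<Rightarrow> real) \<Rightarrow> ('a \<times> nat) set \<Rightarrow> real" where
  "wsize \<mu> A = (\<Sum>(v,c)\<in>A. \<mu> v c)"

definition list_weight :: "('a \<Rightarrow> nat set) \<Rightarrow> ('a \<Rightarrow> nat \<Rightarrow> real) \<Rightarrow> 'a \<Rightarrow> real" where
  "list_weight L \<mu> v = (\<Sum>c\<in>L v. \<mu> v c)"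

definition nbhd :: "'a set set \<Rightarrow> ('a \<Rightarrow> nat set) \<Rightarrow> ('a \<Rightarrow> 'a \<Rightarrow> nat \<Rightarrow> nat)
                    \<Rightarrow> 'a \<Rightarrow> nat \<Rightarrow> ('a \<times> nat) set" where
  "nbhd E L \<sigma> v c = {(w, c'). adjacent E v w \<and> c' \<in> L w \<and> blocks \<sigma> (w, c') (v, c)}"

definition is_colouring :: "'a set \<Rightarrow> 'a set set \<Rightarrow> ('a \<Rightarrow> nat set)
                    \<Rightarrow> ('a \<Rightarrow> 'a \<Rightarrow> nat \<Rightarrow> nat) \<Rightarrow> ('a \<Rightarrow> nat) \<Rightarrow> bool" where
  "is_colouring V E L \<sigma> \<gamma> \<longleftrightarrow>
     (\<forall>v\<in>V. \<gamma> v \<in> L v) \<and>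
     (\<forall>u\<in>V. \<forall>v\<in>V. adjacent E u v \<longrightarrow> \<not> blocks \<sigma> (v, \<gamma> v) (u, \<gamma> u))"

end

theory Submission
  imports Defs "HOL-Library.FuncSet"
begin

(* For S a subset of V let Z(S) be the total weight of the
   proper (L, sigma)-colourings of S, a colouring g weighing the product of the mu(v, g v). A proper
   colouring g of S extends to a new vertex v by a colour c unless g uses some (w, c') of N(v, c)
   with w in S, and the proper colourings of S using c' at w weigh at most mu(w, c') Z(S - w).
   So if Z(S - w) <= (2/l) Z(S) for all w, then Z(S + v) >= |L(v)|_mu (1 - 2n/l) Z(S) >= (l/2) Z(S)
   as soon as l >= 4n, which l/n >= 3e guarantees; by induction on |S| this ratio bound holds for
   all S, whence Z(V) >= (l/2)^|V| > 0. *)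

locale correspondence_colouring =
  fixes V :: "'a set" and E :: "'a set set" and \<sigma> :: "'a \<Rightarrow> 'a \<Rightarrow> nat \<Rightarrow> nat"
    and L :: "'a \<Rightarrow> nat set" and \<mu> :: "'a \<Rightarrow> nat \<Rightarrow> real"
  assumes finite_V: "finite V" and hypergraph: "hypergraph V E"
    and correspondence: "vertex_correspondence E \<sigma>"
    and list_assignment: "weighted_list_assignment V L \<mu>"
    and finite_lists: "\<forall>v\<in>V. finite (L v)"
begin

definition proper :: "'a set \<Rightarrow> ('a \<Rightarrow> nat) \<Rightarrow> bool" where
  "proper S g \<longleftrightarrow> (\<forall>u\<in>S. \<forall>v\<in>S. adjacent E u v \<longrightarrow> \<not> blocks \<sigma> (v, g v) (u, g u))"

definition unblocked :: "'a set \<Rightarrow> 'a \<Rightarrow> ('a \<Rightarrow> nat) \<Rightarrow> nat \<Rightarrow> bool" where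
  "unblocked S v g c \<longleftrightarrow> (\<forall>w\<in>S. adjacent E v w \<longrightarrow> \<not> blocks \<sigma> (w, g w) (v, c))"

definition weight :: "'a set \<Rightarrow> ('a \<Rightarrow> nat) \<Rightarrow> real" where
  "weight S g = (\<Prod>v\<in>S. \<mu> v (g v))"

definition colouring_weight :: "'a set \<Rightarrow> (('a \<Rightarrow> nat) \<Rightarrow> bool) \<Rightarrow> real" where
  "colouring_weight S P = (\<Sum>g\<in>Pi\<^sub>E S L. if proper S g \<and> P g then weight S g else 0)"

abbreviation total_weight :: "'a set \<Rightarrow> real" where
  "total_weight S \<equiv> colouring_weight S (\<lambda>_. True)"

lemma adjacent_sym: "adjacent E u v \<Longrightarrow> adjacent E v u"
  unfolding adjacent_def by blast

lemma adjacent_in_V: "adjacent E u v \<Longrightarrow> u \<in> V \<and> v \<in> V"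
  using hypergraph unfolding adjacent_def hypergraph_def by blast

lemma lists_subset_colours: "v \<in> V \<Longrightarrow> L v \<subseteq> colours"
  using list_assignment unfolding weighted_list_assignment_def by blast

lemma mu_nonneg: "v \<in> V \<Longrightarrow> c \<in> L v \<Longrightarrow> 0 \<le> \<mu> v c"
  using list_assignment unfolding weighted_list_assignment_def by blast

lemma blocks_sym:
  assumes "adjacent E u v" "c \<in> L u" "c' \<in> L v"
  shows "blocks \<sigma> (u, c) (v, c') \<longleftrightarrow> blocks \<sigma> (v, c') (u, c)"
proof -
  have "c \<in> colours" "c' \<in> colours"
    using assms adjacent_in_V lists_subset_colours by blast+
  moreover have "\<forall>c\<in>colours. \<sigma> v u (\<sigma> u v c) = c" "\<forall>c\<in>colours. \<sigma> u v (\<sigma> v u c) = c"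
    using correspondence assms(1) adjacent_sym unfolding vertex_correspondence_def by blast+
  ultimately show ?thesis
    unfolding blocks_def by auto
qed

lemma finite_nbhd: "v \<in> V \<Longrightarrow> finite (nbhd E L \<sigma> v c)"
proof -
  have "nbhd E L \<sigma> v c \<subseteq> Sigma V L"
    unfolding nbhd_def using adjacent_in_V by auto
  moreover have "finite (Sigma V L)"
    using finite_V finite_lists by (intro finite_SigmaI) auto
  ultimately show ?thesis by (rule finite_subset)
qed

lemma wsize_subset_nbhd_le:
  assumes "v \<in> V" "A \<subseteq> nbhd E L \<sigma> v c"
  shows "wsize \<mu> A \<le> wsize \<mu> (nbhd E L \<sigma> v c)"
  unfolding wsize_def
proof (rule sum_mono2)
  show "finite (nbhd E L \<sigma> v c)" using finite_nbhd[OF assms(1)] .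
  show "\<And>p. p \<in> nbhd E L \<sigma> v c - A \<Longrightarrow> 0 \<le> (case p of (w, c') \<Rightarrow> \<mu> w c')"
    unfolding nbhd_def using adjacent_in_V mu_nonneg by auto
qed (use assms(2) in simp)

lemma weight_nonneg: "S \<subseteq> V \<Longrightarrow> g \<in> Pi\<^sub>E S L \<Longrightarrow> 0 \<le> weight S g"
  unfolding weight_def by (intro prod_nonneg) (auto intro: mu_nonneg)

lemma weight_insert_upd:
  "finite S \<Longrightarrow> v \<notin> S \<Longrightarrow> weight (insert v S) (g(v := y)) = \<mu> v y * weight S g"
  unfolding weight_def by (auto intro!: prod.cong)

lemma colouring_weight_nonneg: "S \<subseteq> V \<Longrightarrow> 0 \<le> colouring_weight S P"
  unfolding colouring_weight_def by (intro sum_nonneg) (auto intro: weight_nonneg)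

lemma colouring_weight_mono:
  "S \<subseteq> V \<Longrightarrow> (\<And>g. P g \<Longrightarrow> Q g) \<Longrightarrow> colouring_weight S P \<le> colouring_weight S Q"
  unfolding colouring_weight_def by (intro sum_mono) (auto intro: weight_nonneg)

lemma colouring_weight_False: "colouring_weight S (\<lambda>_. False) = 0"
  unfolding colouring_weight_def by simp

lemma total_weight_empty: "total_weight {} = 1"
  unfolding colouring_weight_def weight_def proper_def by simp

lemma proper_insert_upd_iff:
  assumes "S \<subseteq> V" "v \<in> V" "v \<notin> S" "y \<in> L v" "h \<in> Pi\<^sub>E S L"
  shows "proper (insert v S) (h(v := y)) \<longleftrightarrow> proper S h \<and> unblocked S v h y"
proof -
  have "blocks \<sigma> (v, y) (u, h u) \<longleftrightarrow> blocks \<sigma> (u, h u) (v, y)" if "u \<in> S" "adjacent E u v" for u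
    using blocks_sym[OF adjacent_sym[OF that(2)]] assms(4,5) that(1) by auto
  moreover have "\<not> adjacent E v v" unfolding adjacent_def by simp
  ultimately show ?thesis
    unfolding proper_def unblocked_def using assms(3) adjacent_sym by auto
qed

lemma colouring_weight_insert:
  assumes "S \<subseteq> V" "v \<in> V" "v \<notin> S"
  shows "colouring_weight (insert v S) P
    = (\<Sum>y\<in>L v. \<mu> v y * colouring_weight S (\<lambda>h. unblocked S v h y \<and> P (h(v := y))))"
proof -
  have "finite S" using assms(1) finite_V finite_subset by blast
  have "colouring_weight (insert v S) P = (\<Sum>(y, h)\<in>L v \<times> Pi\<^sub>E S L.
      if proper (insert v S) (h(v := y)) \<and> P (h(v := y)) then weight (insert v S) (h(v := y)) else 0)"
    unfolding colouring_weight_def PiE_insert_eq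
    by (subst sum.reindex[OF inj_combinator[OF assms(3)]]) (simp add: case_prod_beta')
  also have "\<dots> = (\<Sum>(y, h)\<in>L v \<times> Pi\<^sub>E S L.
      if proper S h \<and> unblocked S v h y \<and> P (h(v := y)) then \<mu> v y * weight S h else 0)"
    using \<open>finite S\<close>
    by (intro sum.cong refl) (auto simp: proper_insert_upd_iff[OF assms] weight_insert_upd assms(3))
  also have "\<dots> = (\<Sum>y\<in>L v. \<mu> v y * colouring_weight S (\<lambda>h. unblocked S v h y \<and> P (h(v := y))))"
    unfolding colouring_weight_def sum.cartesian_product[symmetric] sum_distrib_left
    by (intro sum.cong refl) auto
  finally show ?thesis .
qed

lemma colouring_weight_fixed_le:
  assumes "S \<subseteq> V" "w \<in> S" "c \<in> L w"
  shows "colouring_weight S (\<lambda>g. g w = c) \<le> \<mu> w c * total_weight (S - {w})"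
proof -
  let ?T = "S - {w}"
  let ?f = "\<lambda>y. \<mu> w y * colouring_weight ?T (\<lambda>h. unblocked ?T w h y \<and> (h(w := y)) w = c)"
  have TV: "?T \<subseteq> V" and wV: "w \<in> V" using assms by auto
  have "colouring_weight S (\<lambda>g. g w = c) = colouring_weight (insert w ?T) (\<lambda>g. g w = c)"
    using assms(2) by (simp add: insert_absorb)
  also have "\<dots> = (\<Sum>y\<in>L w. ?f y)"
    using colouring_weight_insert[OF TV wV] by simp
  also have "\<dots> = ?f c + (\<Sum>y\<in>L w - {c}. ?f y)"
    using finite_lists wV assms(3) by (intro sum.remove) auto
  also have "\<dots> = ?f c"
    by (subst sum.neutral) (auto simp: colouring_weight_False)
  also have "\<dots> \<le> \<mu> w c * total_weight ?T"
    using colouring_weight_mono[OF TV] mu_nonneg[OF wV assms(3)] by (intro mult_left_mono) auto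
  finally show ?thesis .
qed

lemma colouring_weight_unblocked_ge:
  assumes S: "S \<subseteq> V" and v: "v \<in> V"
  shows "total_weight S - (\<Sum>(w, c')\<in>nbhd E L \<sigma> v c \<inter> S \<times> UNIV. colouring_weight S (\<lambda>g. g w = c'))
    \<le> colouring_weight S (\<lambda>g. unblocked S v g c)"
proof -
  let ?N = "nbhd E L \<sigma> v c \<inter> S \<times> UNIV"
  let ?blocked_by = "\<lambda>g (w, c'). if proper S g \<and> g w = c' then weight S g else 0"
  have "finite ?N" using finite_nbhd[OF v] by blast
  have pointwise: "(if proper S g then weight S g else 0) - (\<Sum>p\<in>?N. ?blocked_by g p)
      \<le> (if proper S g \<and> unblocked S v g c then weight S g else 0)" if g: "g \<in> Pi\<^sub>E S L" for g
  proof (cases "proper S g \<and> \<not> unblocked S v g c")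
    case True
    then obtain w where "w \<in> S" "adjacent E v w" "blocks \<sigma> (w, g w) (v, c)"
      unfolding unblocked_def by blast
    then have "(w, g w) \<in> ?N" using g unfolding nbhd_def by auto
    then have "?blocked_by g (w, g w) \<le> (\<Sum>p\<in>?N. ?blocked_by g p)"
      using \<open>finite ?N\<close> weight_nonneg[OF S g] by (intro member_le_sum) (auto split: if_split_asm)
    then show ?thesis using True by simp
  next
    case False
    have "0 \<le> (\<Sum>p\<in>?N. ?blocked_by g p)"
      using weight_nonneg[OF S g] by (intro sum_nonneg) auto
    then show ?thesis using False weight_nonneg[OF S g] by auto
  qed
  have "total_weight S - (\<Sum>(w, c')\<in>?N. colouring_weight S (\<lambda>g. g w = c'))
      = (\<Sum>g\<in>Pi\<^sub>E S L. (if proper S g then weight S g else 0) - (\<Sum>p\<in>?N. ?blocked_by g p))"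
    unfolding colouring_weight_def sum_subtractf by (subst sum.swap) (simp add: case_prod_unfold)
  also have "\<dots> \<le> colouring_weight S (\<lambda>g. unblocked S v g c)"
    unfolding colouring_weight_def by (intro sum_mono pointwise)
  finally show ?thesis .
qed

lemma total_weight_insert_ge:
  assumes S: "S \<subseteq> V" and v: "v \<in> V" "v \<notin> S" and "0 \<le> K"
    and remove_le: "\<And>w. w \<in> S \<Longrightarrow> total_weight (S - {w}) \<le> K * total_weight S"
    and nbhd_le: "\<forall>c\<in>L v. wsize \<mu> (nbhd E L \<sigma> v c) \<le> n"
  shows "list_weight L \<mu> v * (1 - n * K) * total_weight S \<le> total_weight (insert v S)"
proof -
  let ?Z = "total_weight S"
  let ?N = "\<lambda>c. nbhd E L \<sigma> v c \<inter> S \<times> UNIV"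
  have Z: "0 \<le> ?Z" using colouring_weight_nonneg[OF S] .
  have blocked_le: "(\<Sum>(w, c')\<in>?N c. colouring_weight S (\<lambda>g. g w = c')) \<le> n * K * ?Z"
    if c: "c \<in> L v" for c
  proof -
    have "(\<Sum>(w, c')\<in>?N c. colouring_weight S (\<lambda>g. g w = c')) \<le> (\<Sum>(w, c')\<in>?N c. \<mu> w c' * (K * ?Z))"
    proof (rule sum_mono)
      fix p assume "p \<in> ?N c"
      then obtain w c' where p: "p = (w, c')" and "w \<in> S" "c' \<in> L w"
        unfolding nbhd_def by auto
      have "colouring_weight S (\<lambda>g. g w = c') \<le> \<mu> w c' * total_weight (S - {w})"
        using colouring_weight_fixed_le[OF S \<open>w \<in> S\<close> \<open>c' \<in> L w\<close>] .
      also have "\<dots> \<le> \<mu> w c' * (K * ?Z)"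
        using remove_le[OF \<open>w \<in> S\<close>] mu_nonneg \<open>w \<in> S\<close> \<open>c' \<in> L w\<close> S
        by (intro mult_left_mono) auto
      finally show "(case p of (w, c') \<Rightarrow> colouring_weight S (\<lambda>g. g w = c'))
          \<le> (case p of (w, c') \<Rightarrow> \<mu> w c' * (K * ?Z))"
        unfolding p by simp
    qed
    also have "\<dots> = wsize \<mu> (?N c) * (K * ?Z)"
      unfolding wsize_def by (simp add: sum_distrib_right case_prod_unfold)
    also have "\<dots> \<le> n * (K * ?Z)"
    proof (rule mult_right_mono)
      have "wsize \<mu> (?N c) \<le> wsize \<mu> (nbhd E L \<sigma> v c)"
        using wsize_subset_nbhd_le[OF v(1)] by blast
      then show "wsize \<mu> (?N c) \<le> n" using nbhd_le c by (meson order_trans)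
    qed (use \<open>0 \<le> K\<close> Z in simp)
    finally show ?thesis by simp
  qed
  have "list_weight L \<mu> v * (1 - n * K) * ?Z = (\<Sum>c\<in>L v. \<mu> v c * (?Z - n * K * ?Z))"
    unfolding list_weight_def sum_distrib_right by (intro sum.cong refl) (simp add: algebra_simps)
  also have "\<dots> \<le> (\<Sum>c\<in>L v. \<mu> v c * (?Z - (\<Sum>(w, c')\<in>?N c. colouring_weight S (\<lambda>g. g w = c'))))"
    using blocked_le mu_nonneg[OF v(1)] by (intro sum_mono mult_left_mono) auto
  also have "\<dots> \<le> (\<Sum>c\<in>L v. \<mu> v c * colouring_weight S (\<lambda>g. unblocked S v g c))"
    using colouring_weight_unblocked_ge[OF S v(1)] mu_nonneg[OF v(1)]
    by (intro sum_mono mult_left_mono) auto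
  also have "\<dots> = total_weight (insert v S)"
    using colouring_weight_insert[OF S v] by simp
  finally show ?thesis .
qed

lemma total_weight_insert_ge_half:
  assumes "0 < l" "4 * n \<le> l"
    and list_weight_ge: "\<forall>v\<in>V. list_weight L \<mu> v \<ge> l"
    and nbhd_le: "\<forall>v\<in>V. \<forall>c\<in>L v. wsize \<mu> (nbhd E L \<sigma> v c) \<le> n"
  shows "S \<subseteq> V \<Longrightarrow> v \<in> V \<Longrightarrow> v \<notin> S \<Longrightarrow> l / 2 * total_weight S \<le> total_weight (insert v S)"
proof (induction "card S" arbitrary: S v rule: less_induct)
  case (less S v)
  have "finite S" using less.prems(1) finite_V finite_subset by blast
  have remove_le: "total_weight (S - {w}) \<le> 2 / l * total_weight S" if "w \<in> S" for w
  proof -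
    have "l / 2 * total_weight (S - {w}) \<le> total_weight (insert w (S - {w}))"
      using less.hyps[of "S - {w}" w] card_Diff1_less[OF \<open>finite S\<close> that] less.prems(1) that by auto
    then show ?thesis using that \<open>0 < l\<close> by (simp add: insert_absorb field_simps)
  qed
  have "l / 2 \<le> list_weight L \<mu> v * (1 - n * (2 / l))"
  proof -
    have "1 / 2 \<le> 1 - n * (2 / l)" using assms(1,2) by (simp add: field_simps)
    moreover have "l \<le> list_weight L \<mu> v" using list_weight_ge less.prems(2) by blast
    ultimately have "l * (1 / 2) \<le> list_weight L \<mu> v * (1 - n * (2 / l))"
      using assms(1) by (intro mult_mono) auto
    then show ?thesis by simp
  qed
  then have "l / 2 * total_weight S \<le> list_weight L \<mu> v * (1 - n * (2 / l)) * total_weight S"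
    using colouring_weight_nonneg[OF less.prems(1)] by (rule mult_right_mono)
  also have "\<dots> \<le> total_weight (insert v S)"
    using remove_le nbhd_le less.prems(2) assms(1)
    by (intro total_weight_insert_ge[OF less.prems, of "2 / l" n]) auto
  finally show ?case .
qed

lemma total_weight_ge_power:
  assumes "0 < l" "4 * n \<le> l"
    and "\<forall>v\<in>V. list_weight L \<mu> v \<ge> l"
    and "\<forall>v\<in>V. \<forall>c\<in>L v. wsize \<mu> (nbhd E L \<sigma> v c) \<le> n"
    and "S \<subseteq> V"
  shows "(l / 2) ^ card S \<le> total_weight S"
proof -
  have "finite S" using assms(5) finite_V finite_subset by blast
  then show ?thesis using assms(5)
  proof (induction S rule: finite_induct)
    case empty
    then show ?case by (simp add: total_weight_empty)
  next
    case (insert v S)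
    have "(l / 2) ^ card (insert v S) = l / 2 * (l / 2) ^ card S" using insert by simp
    also have "\<dots> \<le> l / 2 * total_weight S" using insert assms(1) by (intro mult_left_mono) auto
    also have "\<dots> \<le> total_weight (insert v S)"
      by (rule total_weight_insert_ge_half[OF assms(1-4)]) (use insert in auto)
    finally show ?case .
  qed
qed

lemma colouring_if_total_weight_pos:
  assumes "0 < total_weight V"
  shows "\<exists>\<gamma>. is_colouring V E L \<sigma> \<gamma>"
proof -
  have "\<exists>g\<in>Pi\<^sub>E V L. proper V g"
  proof (rule ccontr)
    assume "\<not> ?thesis"
    then have "total_weight V = 0"
      unfolding colouring_weight_def by (intro sum.neutral) auto
    then show False using assms by simp
  qed
  then obtain g where "g \<in> Pi\<^sub>E V L" "proper V g" by blast
  then have "is_colouring V E L \<sigma> g"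
    unfolding is_colouring_def proper_def by auto
  then show ?thesis by blast
qed

end

theorem lemma7p1:
  fixes V :: "'a set" and E :: "'a set set" and k :: nat
    and \<sigma> :: "'a \<Rightarrow> 'a \<Rightarrow> nat \<Rightarrow> nat"
    and L :: "'a \<Rightarrow> nat set" and \<mu> :: "'a \<Rightarrow> nat \<Rightarrow> real"
    and l n :: real
  assumes "finite V" and "hypergraph V E" and "k_uniform k E" and "linear_hg E"
    and "vertex_correspondence E \<sigma>"
    and "weighted_list_assignment V L \<mu>"
    and "\<forall>v\<in>V. finite (L v)"
    and "l > 0" and "n > 0"
    and "l / n \<ge> 3 * exp 1"
    and "\<forall>v\<in>V. list_weight L \<mu> v \<ge> l"
    and "\<forall>v\<in>V. \<forall>c\<in>L v. wsize \<mu> (nbhd E L \<sigma> v c) \<le> n"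
  shows "\<exists>\<gamma>. is_colouring V E L \<sigma> \<gamma>"
proof -
  interpret correspondence_colouring V E \<sigma> L \<mu>
    using assms by unfold_locales
  have "4 \<le> l / n"
    using assms(10) exp_ge_add_one_self[of 1] by linarith
  then have "4 * n \<le> l"
    using assms(9) by (simp add: field_simps)
  then have "(l / 2) ^ card V \<le> total_weight V"
    using total_weight_ge_power[OF assms(8) _ assms(11,12)] by blast
  moreover have "0 < (l / 2) ^ card V"
    using assms(8) by simp
  ultimately show ?thesis
    by (intro colouring_if_total_weight_pos) linarith
qed

end
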